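(* Let $X$ be a two-sided quaternionic Banach space and $T\in\mathcal{B}(X)$. The following three statements are equivalent: (i) $T$ is power-bounded, i.e. $\sup_{n\in\mathbb{N}}\|T^n\|<\infty$; (ii) every $s\in\mathbb{H}$ with $|s|>1$ lies in $\rho_S(T)$, and there exists a constant $C>0$ such that $$\|\mathcal{Y}_L^n(s,T)\|\le\frac{C}{(1-\frac{1}{|s|})^n}\quad\text{for all } s\in\mathbb{H} \text{ with } |s|>1 \text{ and all } n\in\mathbb{N};$$ (iii) every $s\in\mathbb{H}$ with $|s|>1$ lies in $\rho_S(T)$, and there exists a constant $C>0$ such that $$\|\mathcal{Y}_R^n(s,T)\|\le\frac{C}{(1-\frac{1}{|s|})^n}\quad\text{for all } s\in\mathbb{H} \text{ with } |s|>1 \text{ and all } n\in\mathbb{N}.$$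
   Context: $\mathbb{N}$ is the set of positive integers. $\mathbb{H}$ denotes the real algebra of quaternions; for $s\in\mathbb{H}$, $\overline{s}$ is its conjugate, $\mathrm{Re}(s)$ its real part, $|s|$ its modulus. $X$ is a two-sided vector space over $\mathbb{H}$ which is a Banach space; $\mathcal{B}(X)$ is the algebra of bounded right $\mathbb{H}$-linear operators on $X$ with identity $\mathcal{I}$ and operator norm; $(sT)(v)=s(Tv)$, $(Ts)(v)=T(sv)$. For $s\in\mathbb{H}$ put $Q_s(T)=T^2-2\mathrm{Re}(s)T+|s|^2\mathcal{I}$; $\rho_S(T)=\{s\in\mathbb{H}: Q_s(T)\text{ invertible in }\mathcal{B}(X)\}$. For $s\in\rho_S(T)$ and $n\in\mathbb{N}$ define $$S_L^{-n}(s,T)=Q_s(T)^{-n}\sum_{m=0}^{n}\binom{n}{m}(-T)^m\overline{s}^{\,n-m},\qquad S_R^{-n}(s,T)=\sum_{m=0}^{n}\binom{n}{m}\overline{s}^{\,n-m}(-T)^mQ_s(T)^{-n},$$ and the (powers of the) left and right spherical Yosida approximations $$\mathcal{Y}_L^n(s,T)=T^nS_L^{-n}(s,T)s^n,\qquad \mathcal{Y}_R^n(s,T)=s^nS_R^{-n}(s,T)T^n.$$ *)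

theory Defs
  imports "HOL-Analysis.Analysis"
begin

datatype quat = Quat (qRe: real) (qIm1: real) (qIm2: real) (qIm3: real)

lemma quat_eq_iff: "x = y \<longleftrightarrow> qRe x = qRe y \<and> qIm1 x = qIm1 y \<and> qIm2 x = qIm2 y \<and> qIm3 x = qIm3 y"
  by (cases x; cases y) auto

instantiation quat :: ring_1
begin
definition "0 = Quat 0 0 0 0"
definition "1 = Quat 1 0 0 0"
definition "x + y = Quat (qRe x + qRe y) (qIm1 x + qIm1 y) (qIm2 x + qIm2 y) (qIm3 x + qIm3 y)"
definition "x - y = Quat (qRe x - qRe y) (qIm1 x - qIm1 y) (qIm2 x - qIm2 y) (qIm3 x - qIm3 y)"
definition "- x = Quat (- qRe x) (- qIm1 x) (- qIm2 x) (- qIm3 x)"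
definition "x * y = Quat
   (qRe x * qRe y - qIm1 x * qIm1 y - qIm2 x * qIm2 y - qIm3 x * qIm3 y)
   (qRe x * qIm1 y + qIm1 x * qRe y + qIm2 x * qIm3 y - qIm3 x * qIm2 y)
   (qRe x * qIm2 y - qIm1 x * qIm3 y + qIm2 x * qRe y + qIm3 x * qIm1 y)
   (qRe x * qIm3 y + qIm1 x * qIm2 y - qIm2 x * qIm1 y + qIm3 x * qRe y)"
instance
  by standard (auto simp: quat_eq_iff zero_quat_def one_quat_def plus_quat_def minus_quat_def
      uminus_quat_def times_quat_def algebra_simps)
end

definition qcnj :: "quat \<Rightarrow> quat" where
  "qcnj x = Quat (qRe x) (- qIm1 x) (- qIm2 x) (- qIm3 x)"

definition qnorm :: "quat \<Rightarrow> real" where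
  "qnorm x = sqrt ((qRe x)\<^sup>2 + (qIm1 x)\<^sup>2 + (qIm2 x)\<^sup>2 + (qIm3 x)\<^sup>2)"

definition qreal :: "real \<Rightarrow> quat" where
  "qreal r = Quat r 0 0 0"

text \<open>The underlying real Banach space is the type 'a; L s v is the left product s v,
  R s v is the right product v s.\<close>
definition two_sided_qbanach :: "(quat \<Rightarrow> 'a::banach \<Rightarrow> 'a) \<Rightarrow> (quat \<Rightarrow> 'a \<Rightarrow> 'a) \<Rightarrow> bool" where
  "two_sided_qbanach L R \<longleftrightarrow>
     (\<forall>s t v. L (s + t) v = L s v + L t v) \<and>
     (\<forall>s v w. L s (v + w) = L s v + L s w) \<and>
     (\<forall>s t v. L (s * t) v = L s (L t v)) \<and>
     (\<forall>v. L 1 v = v) \<and>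
     (\<forall>s t v. R (s + t) v = R s v + R t v) \<and>
     (\<forall>s v w. R s (v + w) = R s v + R s w) \<and>
     (\<forall>s t v. R (s * t) v = R t (R s v)) \<and>
     (\<forall>v. R 1 v = v) \<and>
     (\<forall>s t v. L s (R t v) = R t (L s v)) \<and>
     (\<forall>r v. L (qreal r) v = r *\<^sub>R v) \<and>
     (\<forall>r v. R (qreal r) v = r *\<^sub>R v) \<and>
     (\<forall>s v. norm (L s v) = qnorm s * norm v) \<and>
     (\<forall>s v. norm (R s v) = qnorm s * norm v)"

definition qbounded_op :: "(quat \<Rightarrow> 'a::banach \<Rightarrow> 'a) \<Rightarrow> ('a \<Rightarrow> 'a) \<Rightarrow> bool" where
  "qbounded_op R T \<longleftrightarrow> bounded_linear T \<and> (\<forall>s v. T (R s v) = R s (T v))"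

definition Qop :: "quat \<Rightarrow> ('a::real_vector \<Rightarrow> 'a) \<Rightarrow> 'a \<Rightarrow> 'a" where
  "Qop s T = (\<lambda>v. T (T v) - (2 * qRe s) *\<^sub>R T v + (qnorm s)\<^sup>2 *\<^sub>R v)"

definition S_resolvent_set :: "(quat \<Rightarrow> 'a::banach \<Rightarrow> 'a) \<Rightarrow> ('a \<Rightarrow> 'a) \<Rightarrow> quat set" where
  "S_resolvent_set R T = {s. \<exists>S. qbounded_op R S \<and> S \<circ> Qop s T = id \<and> Qop s T \<circ> S = id}"

text \<open>Q_s(T)^{-1}; meaningful for s in the S-resolvent set.\<close>
definition Qinv :: "quat \<Rightarrow> ('a::real_vector \<Rightarrow> 'a) \<Rightarrow> 'a \<Rightarrow> 'a" where
  "Qinv s T = inv (Qop s T)"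

definition SL_neg :: "(quat \<Rightarrow> 'a::banach \<Rightarrow> 'a) \<Rightarrow> nat \<Rightarrow> quat \<Rightarrow> ('a \<Rightarrow> 'a) \<Rightarrow> 'a \<Rightarrow> 'a" where
  "SL_neg L n s T = (\<lambda>v. (Qinv s T ^^ n)
      (\<Sum>m=0..n. real (n choose m) *\<^sub>R (((\<lambda>w. - T w) ^^ m) (L (qcnj s ^ (n - m)) v))))"

definition SR_neg :: "(quat \<Rightarrow> 'a::banach \<Rightarrow> 'a) \<Rightarrow> nat \<Rightarrow> quat \<Rightarrow> ('a \<Rightarrow> 'a) \<Rightarrow> 'a \<Rightarrow> 'a" where
  "SR_neg L n s T = (\<lambda>v.
      (\<Sum>m=0..n. real (n choose m) *\<^sub>R L (qcnj s ^ (n - m)) (((\<lambda>w. - T w) ^^ m) ((Qinv s T ^^ n) v))))"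

definition YL :: "(quat \<Rightarrow> 'a::banach \<Rightarrow> 'a) \<Rightarrow> nat \<Rightarrow> quat \<Rightarrow> ('a \<Rightarrow> 'a) \<Rightarrow> 'a \<Rightarrow> 'a" where
  "YL L n s T = (\<lambda>v. (T ^^ n) (SL_neg L n s T (L (s ^ n) v)))"

definition YR :: "(quat \<Rightarrow> 'a::banach \<Rightarrow> 'a) \<Rightarrow> nat \<Rightarrow> quat \<Rightarrow> ('a \<Rightarrow> 'a) \<Rightarrow> 'a \<Rightarrow> 'a" where
  "YR L n s T = (\<lambda>v. L (s ^ n) (SR_neg L n s T ((T ^^ n) v)))"

end

theory Submission
  imports Defs
begin

(* Power-boundedness of T yields the equivalent norm sup_k |T^k v|, in which T is a contraction.
   For |s| > 1 this makes both factors of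
     Q_s(T) = |s|^2 (1 - T R_(conj s) / |s|^2) (1 - T R_s / |s|^2)
   (R_q is right multiplication by q) invertible by Neumann series, with inverses of norm at most
   1 / (1 - 1/|s|).  Left multiplication by an element of the complex slice C_j of s equals
   R_(conj p) P_+ + R_p P_- with the projections P_+- = (1 +- R_j L_j) / 2, so the binomial
   formula turns Y^n(s,T) into T^n times n-th powers of these inverses, composed with P_+-.
   Conversely, for real s = r one gets Y^n(r,T) = T^n (1 - T/r)^-n, hence
   |T^n| <= (1 + |T|/r)^n C / (1 - 1/r)^n, and r -> infinity gives |T^n| <= C. *)

section \<open>Bounded operators\<close>

typedef (overloaded) 'a bop = "{f :: 'a::real_normed_vector \<Rightarrow> 'a. bounded_linear f}"
  morphisms app Bop
  by (auto intro: bounded_linear_zero)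

setup_lifting type_definition_bop

instantiation bop :: (real_normed_vector) "{real_normed_vector, ring, monoid_mult}"
begin

lift_definition norm_bop :: "'a bop \<Rightarrow> real" is onorm .
lift_definition zero_bop :: "'a bop" is "\<lambda>x. 0" by (rule bounded_linear_zero)
lift_definition one_bop :: "'a bop" is "\<lambda>x. x" by (rule bounded_linear_ident)
lift_definition plus_bop :: "'a bop \<Rightarrow> 'a bop \<Rightarrow> 'a bop" is "\<lambda>f g x. f x + g x"
  by (rule bounded_linear_add)
lift_definition minus_bop :: "'a bop \<Rightarrow> 'a bop \<Rightarrow> 'a bop" is "\<lambda>f g x. f x - g x"
  by (rule bounded_linear_sub)
lift_definition uminus_bop :: "'a bop \<Rightarrow> 'a bop" is "\<lambda>f x. - f x"
  by (rule bounded_linear_minus)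
lift_definition times_bop :: "'a bop \<Rightarrow> 'a bop \<Rightarrow> 'a bop" is "\<lambda>f g x. f (g x)"
  by (rule bounded_linear_compose)
lift_definition scaleR_bop :: "real \<Rightarrow> 'a bop \<Rightarrow> 'a bop" is "\<lambda>r f x. r *\<^sub>R f x"
  by (rule bounded_linear_const_scaleR)

definition dist_bop :: "'a bop \<Rightarrow> 'a bop \<Rightarrow> real" where
  "dist_bop f g = norm (f - g)"
definition sgn_bop :: "'a bop \<Rightarrow> 'a bop" where
  "sgn_bop f = inverse (norm f) *\<^sub>R f"
definition uniformity_bop :: "('a bop \<times> 'a bop) filter" where
  "uniformity_bop = (INF e\<in>{0<..}. principal {(f, g). dist f g < e})"
definition open_bop :: "'a bop set \<Rightarrow> bool" where
  "open_bop S = (\<forall>f\<in>S. \<forall>\<^sub>F (f', g) in uniformity. f' = f \<longrightarrow> g \<in> S)"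

instance
  apply standard
  unfolding dist_bop_def sgn_bop_def uniformity_bop_def open_bop_def
  apply (rule refl | transfer,
      force simp: onorm_triangle onorm_scaleR onorm_eq_0 algebra_simps linear_simps)+
  done

end

instance bop :: (real_normed_vector) real_normed_algebra
proof
  fix r :: real and f g :: "'a bop"
  show "r *\<^sub>R f * g = r *\<^sub>R (f * g)"
    by transfer simp
  show "f * r *\<^sub>R g = r *\<^sub>R (f * g)"
    by transfer (simp add: linear_simps)
  show "norm (f * g) \<le> norm f * norm g"
    by transfer (use onorm_compose in \<open>auto simp: o_def\<close>)
qed

lemma app_simps [simp]:
  "app 0 v = 0" "app 1 v = v" "app (f + g) v = app f v + app g v"
  "app (f - g) v = app f v - app g v" "app (- f) v = - app f v"
  "app (f * g) v = app f (app g v)" "app (r *\<^sub>R f) v = r *\<^sub>R app f v"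
  by (transfer, simp)+

lemma bop_eqI: "(\<And>v. app f v = app g v) \<Longrightarrow> f = g"
  by transfer auto

lemma bounded_linear_app: "bounded_linear (app f)"
  using app by simp

lemma app_Bop: "bounded_linear f \<Longrightarrow> app (Bop f) = f"
  by (simp add: Bop_inverse)

lemma norm_bop_le: "0 \<le> c \<Longrightarrow> (\<And>v. norm (app f v) \<le> c * norm v) \<Longrightarrow> norm f \<le> c"
  by transfer (rule onorm_bound)

lemma norm_one_bop_le: "norm (1 :: 'a::real_normed_vector bop) \<le> 1"
  by (rule norm_bop_le) simp_all

lemma norm_power_bop_le: "norm (f ^ n) \<le> norm (f :: 'a::real_normed_vector bop) ^ n"
proof (induction n)
  case 0
  show ?case by (simp add: norm_one_bop_le)
next
  case (Suc n)
  have "norm (f ^ Suc n) \<le> norm f * norm (f ^ n)"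
    by (simp add: norm_mult_ineq)
  also have "\<dots> \<le> norm f * norm f ^ n"
    by (simp add: Suc.IH mult_left_mono)
  finally show ?case by simp
qed

lemma app_power: "app (f ^ n) = app f ^^ n"
  by (induction n) (auto simp: fun_eq_iff)

lemma app_sum: "app (sum f A) v = (\<Sum>i\<in>A. app (f i) v)"
  by (induction A rule: infinite_finite_induct) auto

lemma binomial_commuting:
  fixes a b :: "'r::{real_algebra, monoid_mult}"
  assumes ab: "a * b = b * a"
  shows "(a + b) ^ n = (\<Sum>k\<le>n. real (n choose k) *\<^sub>R (a ^ k * b ^ (n - k)))"
proof (induction n)
  case 0
  show ?case by simp
next
  case (Suc n)
  define S where "S = (\<Sum>k\<le>n. real (n choose k) *\<^sub>R (a ^ k * b ^ (n - k)))"
  have aS: "a * S = (\<Sum>k\<le>n. real (n choose k) *\<^sub>R (a ^ Suc k * b ^ (n - k)))"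
    by (simp add: S_def sum_distrib_left mult.assoc)
  have "b * (a ^ k * b ^ (n - k)) = a ^ k * (b * b ^ (n - k))" for k
    by (simp only: mult.assoc[symmetric] power_commuting_commutes[OF ab, symmetric])
  then have "b * (a ^ k * b ^ (n - k)) = a ^ k * b ^ (Suc n - k)" if "k \<le> n" for k
    using that by (simp add: Suc_diff_le)
  then have "b * S = (\<Sum>k\<le>n. real (n choose k) *\<^sub>R (a ^ k * b ^ (Suc n - k)))"
    by (simp add: S_def sum_distrib_left)
  also have "\<dots> = (\<Sum>k\<le>Suc n. real (n choose k) *\<^sub>R (a ^ k * b ^ (Suc n - k)))"
    by simp
  also have "\<dots> = b ^ Suc n + (\<Sum>k\<le>n. real (n choose Suc k) *\<^sub>R (a ^ Suc k * b ^ (n - k)))"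
    by (subst sum.atMost_Suc_shift) simp
  finally have bS: "b * S = \<dots>" .
  have "(\<Sum>k\<le>Suc n. real (Suc n choose k) *\<^sub>R (a ^ k * b ^ (Suc n - k)))
      = b ^ Suc n + (\<Sum>k\<le>n. real (Suc n choose Suc k) *\<^sub>R (a ^ Suc k * b ^ (n - k)))"
    by (subst sum.atMost_Suc_shift) simp
  also have "\<dots> = a * S + b * S"
    by (simp add: aS bS scaleR_add_left sum.distrib)
  finally show ?case
    using Suc.IH by (simp add: S_def distrib_right)
qed

definition commuting :: "'a::times \<Rightarrow> 'a \<Rightarrow> bool" where
  "commuting p q \<longleftrightarrow> p * q = q * p"

lemma commuting_refl [simp]: "commuting p p"
  by (simp add: commuting_def)

lemma commuting_one [simp]: "commuting p 1" "commuting 1 p"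
  for p :: "'a::monoid_mult"
  by (simp_all add: commuting_def)

lemma commuting_sym: "commuting p q \<Longrightarrow> commuting q p"
  by (simp add: commuting_def)

lemma commuting_mult [simp]:
  fixes p q r :: "'a::semigroup_mult"
  shows "commuting p q \<Longrightarrow> commuting p r \<Longrightarrow> commuting p (q * r)"
    and "commuting q p \<Longrightarrow> commuting r p \<Longrightarrow> commuting (q * r) p"
  by (simp_all add: commuting_def) (metis mult.assoc)+

lemma commuting_add [simp]:
  fixes p q r :: "'a::semiring"
  shows "commuting p q \<Longrightarrow> commuting p r \<Longrightarrow> commuting p (q + r)"
    and "commuting q p \<Longrightarrow> commuting r p \<Longrightarrow> commuting (q + r) p"
  by (simp_all add: commuting_def algebra_simps)

lemma commuting_diff [simp]:
  fixes p q r :: "'a::ring"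
  shows "commuting p q \<Longrightarrow> commuting p r \<Longrightarrow> commuting p (q - r)"
    and "commuting q p \<Longrightarrow> commuting r p \<Longrightarrow> commuting (q - r) p"
    and "commuting p q \<Longrightarrow> commuting p (- q)"
    and "commuting q p \<Longrightarrow> commuting (- q) p"
  by (simp_all add: commuting_def algebra_simps)

lemma commuting_scaleR [simp]:
  fixes p q :: "'a::real_algebra"
  shows "commuting p q \<Longrightarrow> commuting p (c *\<^sub>R q)"
    and "commuting q p \<Longrightarrow> commuting (c *\<^sub>R q) p"
  by (simp_all add: commuting_def)

lemma commuting_power [simp]:
  fixes p q :: "'a::monoid_mult"
  shows "commuting p q \<Longrightarrow> commuting p (q ^ n)"
    and "commuting q p \<Longrightarrow> commuting (q ^ n) p"
  by (simp_all add: commuting_def power_commuting_commutes)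

lemma commuting_inverse:
  fixes x y c :: "'a::monoid_mult"
  assumes "x * y = 1" "y * x = 1" "commuting y c"
  shows "commuting x c"
  using assms unfolding commuting_def by (metis mult.assoc mult_1_left mult_1_right)

lemma power_mult_commuting:
  fixes p q :: "'a::monoid_mult"
  shows "commuting p q \<Longrightarrow> (p * q) ^ n = p ^ n * q ^ n"
proof (induction n)
  case (Suc n)
  have "q * p ^ n = p ^ n * q"
    using Suc.prems by (simp add: commuting_def power_commuting_commutes)
  then have "p * q * (p ^ n * q ^ n) = p * p ^ n * (q * q ^ n)"
    by (metis mult.assoc)
  then show ?case
    using Suc by simp
qed simp

lemma binomial_sum_commuting:
  fixes c t :: "'a::{real_algebra, monoid_mult}"
  assumes "commuting c t"
  shows "(\<Sum>m=0..n. real (n choose m) *\<^sub>R ((- t) ^ m * c ^ (n - m))) = (c - t) ^ n"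
    and "(\<Sum>m=0..n. real (n choose m) *\<^sub>R (c ^ (n - m) * (- t) ^ m)) = (c - t) ^ n"
proof -
  have "commuting ((- t) ^ m) (c ^ (n - m))" for m
    using assms by (simp add: commuting_sym)
  then have swap: "(- t) ^ m * c ^ (n - m) = c ^ (n - m) * (- t) ^ m" for m
    by (simp add: commuting_def)
  have "(- t + c) ^ n = (\<Sum>m\<le>n. real (n choose m) *\<^sub>R ((- t) ^ m * c ^ (n - m)))"
    using assms by (intro binomial_commuting) (simp add: commuting_def)
  then show "(\<Sum>m=0..n. real (n choose m) *\<^sub>R ((- t) ^ m * c ^ (n - m))) = (c - t) ^ n"
    by (simp add: atLeast0AtMost)
  then show "(\<Sum>m=0..n. real (n choose m) *\<^sub>R (c ^ (n - m) * (- t) ^ m)) = (c - t) ^ n"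
    by (simp add: swap)
qed

lemma neumann_series_inverse:
  fixes V :: "'a::banach bop"
  assumes bound: "\<And>k v. norm (app (V ^ k) v) \<le> K * \<rho> ^ k * norm v"
    and \<rho>: "0 \<le> \<rho>" "\<rho> < 1"
  shows "\<exists>W. W * (1 - V) = 1 \<and> (1 - V) * W = 1"
proof -
  have norms_summable: "summable (\<lambda>k. norm (app (V ^ k) v))" for v
    by (rule summable_comparison_test'[where g = "\<lambda>k. K * norm v * \<rho> ^ k"])
      (use bound \<rho> in \<open>auto simp: summable_geometric mult_ac\<close>)
  note summable = summable_norm_cancel[OF norms_summable]
  define f where "f v = (\<Sum>k. app (V ^ k) v)" for v
  have "bounded_linear f"
  proof (rule bounded_linear_intro[where K = "\<Sum>k. K * \<rho> ^ k"])
    fix v w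
    show "f (v + w) = f v + f w"
      unfolding f_def by (simp add: linear_simps(1)[OF bounded_linear_app] suminf_add[OF summable summable])
  next
    fix r v
    show "f (r *\<^sub>R v) = r *\<^sub>R f v"
      unfolding f_def by (simp add: linear_simps(5)[OF bounded_linear_app] suminf_scaleR_right[OF summable])
  next
    fix v
    have "norm (f v) \<le> (\<Sum>k. norm (app (V ^ k) v))"
      unfolding f_def by (rule summable_norm[OF norms_summable])
    also have "\<dots> \<le> (\<Sum>k. K * \<rho> ^ k * norm v)"
      by (rule suminf_le)
        (use bound \<rho> norms_summable in \<open>auto simp: summable_geometric intro!: summable_mult2\<close>)
    also have "\<dots> = (\<Sum>k. K * \<rho> ^ k) * norm v"
      by (rule suminf_mult2[symmetric]) (use \<rho> in \<open>auto intro!: summable_mult summable_geometric\<close>)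
    finally show "norm (f v) \<le> norm v * (\<Sum>k. K * \<rho> ^ k)"
      by (simp add: mult.commute)
  qed
  then have app_W: "app (Bop f) = f"
    by (rule app_Bop)
  have f_shift: "f v - v = (\<Sum>k. app (V ^ Suc k) v)" for v
    using suminf_split_head[OF summable[of v]] unfolding f_def by simp
  have "Bop f * (1 - V) = 1"
  proof (rule bop_eqI)
    fix v
    have "f (app V v) = (\<Sum>k. app (V ^ Suc k) v)"
      unfolding f_def by (simp only: power_Suc2 app_simps)
    then show "app (Bop f * (1 - V)) v = app 1 v"
      using f_shift[of v, symmetric] \<open>bounded_linear f\<close> by (simp add: app_W linear_simps(2))
  qed
  moreover have "(1 - V) * Bop f = 1"
  proof (rule bop_eqI)
    fix v
    have "app V (f v) = (\<Sum>k. app (V ^ Suc k) v)"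
      unfolding f_def by (simp add: bounded_linear.suminf[OF bounded_linear_app summable])
    then show "app ((1 - V) * Bop f) v = app 1 v"
      using f_shift[of v, symmetric] by (simp add: app_W)
  qed
  ultimately show ?thesis
    by blast
qed

lemma le_of_bounds_at_top:
  fixes a b C :: real
  assumes bound: "\<And>r. r > 1 \<Longrightarrow> a \<le> (1 + b / r) ^ n * (C / (1 - 1 / r) ^ n)"
  shows "a \<le> C"
proof -
  have "((\<lambda>r::real. 1 / r) \<longlongrightarrow> 0) at_top"
    using tendsto_inverse_0_at_top[OF filterlim_ident] by (simp add: inverse_eq_divide)
  then have "((\<lambda>r::real. (1 + b * (1 / r)) ^ n * (C / (1 - 1 / r) ^ n))
      \<longlongrightarrow> (1 + b * 0) ^ n * (C / (1 - 0) ^ n)) at_top"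
    by (intro tendsto_intros) simp_all
  then have "((\<lambda>r::real. (1 + b / r) ^ n * (C / (1 - 1 / r) ^ n)) \<longlongrightarrow> C) at_top"
    by simp
  moreover have "eventually (\<lambda>r. a \<le> (1 + b / r) ^ n * (C / (1 - 1 / r) ^ n)) at_top"
    unfolding eventually_at_top_dense using bound by blast
  ultimately show ?thesis
    by (rule tendsto_lowerbound) simp
qed

lemma norm_power_le_of_factorization:
  fixes t :: "'a::real_normed_vector bop"
  assumes factor: "\<And>r. r > 1
    \<Longrightarrow> \<exists>Z. t ^ n = (1 - (1 / r) *\<^sub>R t) ^ n * Z \<and> norm Z \<le> C / (1 - 1 / r) ^ n"
  shows "norm (t ^ n) \<le> C"
proof (rule le_of_bounds_at_top)
  fix r :: real
  assume r: "r > 1"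
  then obtain Z where Z: "t ^ n = (1 - (1 / r) *\<^sub>R t) ^ n * Z" "norm Z \<le> C / (1 - 1 / r) ^ n"
    using factor by blast
  have "norm (1 - (1 / r) *\<^sub>R t) \<le> norm (1 :: 'a bop) + norm ((1 / r) *\<^sub>R t)"
    by (rule norm_triangle_ineq4)
  also have "\<dots> \<le> 1 + norm t / r"
    using r norm_one_bop_le by simp
  finally have "norm ((1 - (1 / r) *\<^sub>R t) ^ n) \<le> (1 + norm t / r) ^ n"
    by (meson norm_ge_zero norm_power_bop_le order_trans power_mono)
  then have "norm (t ^ n) \<le> (1 + norm t / r) ^ n * norm Z"
    unfolding Z(1) by (meson norm_ge_zero norm_mult_ineq mult_right_mono order_trans)
  also have "\<dots> \<le> (1 + norm t / r) ^ n * (C / (1 - 1 / r) ^ n)"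
    using r Z(2) by (intro mult_left_mono) simp_all
  finally show "norm (t ^ n) \<le> (1 + norm t / r) ^ n * (C / (1 - 1 / r) ^ n)" .
qed

section \<open>Quaternions and their complex slices\<close>

lemma qcnj_mult: "qcnj (a * b) = qcnj b * qcnj a"
  by (simp add: quat_eq_iff qcnj_def times_quat_def algebra_simps)

lemma qcnj_qcnj [simp]: "qcnj (qcnj a) = a"
  by (simp add: quat_eq_iff qcnj_def)

lemma qcnj_one [simp]: "qcnj 1 = 1"
  by (simp add: qcnj_def one_quat_def)

lemma qcnj_power: "qcnj (a ^ n) = qcnj a ^ n"
  by (induction n) (simp_all add: qcnj_mult power_commutes)

lemma qnorm_qcnj [simp]: "qnorm (qcnj a) = qnorm a"
  by (simp add: qnorm_def qcnj_def)

lemma qRe_qcnj [simp]: "qRe (qcnj a) = qRe a"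
  by (simp add: qcnj_def)

lemma qnorm_nonneg: "0 \<le> qnorm q"
  by (simp add: qnorm_def)

lemma qnorm_qreal [simp]: "qnorm (qreal r) = \<bar>r\<bar>"
  and qcnj_qreal [simp]: "qcnj (qreal r) = qreal r"
  by (simp_all add: qnorm_def qreal_def qcnj_def)

lemma qreal_mult_commute: "qreal r * q = q * qreal r"
  by (simp add: quat_eq_iff qreal_def times_quat_def)

lemma qreal_mult: "qreal a * qreal b = qreal (a * b)"
  by (simp add: quat_eq_iff qreal_def times_quat_def)

lemma qreal_add: "qreal a + qreal b = qreal (a + b)"
  by (simp add: quat_eq_iff qreal_def plus_quat_def)

lemma mult_qcnj_self: "q * qcnj q = qreal ((qnorm q)\<^sup>2)" "qcnj q * q = qreal ((qnorm q)\<^sup>2)"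
  by (simp_all add: quat_eq_iff qreal_def times_quat_def qcnj_def qnorm_def algebra_simps
      power2_eq_square)

lemma add_qcnj_self: "q + qcnj q = qreal (2 * qRe q)" "qcnj q + q = qreal (2 * qRe q)"
  by (simp_all add: quat_eq_iff qreal_def plus_quat_def qcnj_def)

definition unit_imag :: "quat \<Rightarrow> bool" where
  "unit_imag j \<longleftrightarrow> qRe j = 0 \<and> (qIm1 j)\<^sup>2 + (qIm2 j)\<^sup>2 + (qIm3 j)\<^sup>2 = 1"

definition slice :: "quat \<Rightarrow> quat set" where
  "slice j = {qreal a + qreal b * j | a b. True}"

(* A unit imaginary j with q in C_j; for real q the choice j = i is arbitrary. *)
definition imag_unit :: "quat \<Rightarrow> quat" where
  "imag_unit q = (let \<nu> = sqrt ((qIm1 q)\<^sup>2 + (qIm2 q)\<^sup>2 + (qIm3 q)\<^sup>2) in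
     if \<nu> = 0 then Quat 0 1 0 0 else Quat 0 (qIm1 q / \<nu>) (qIm2 q / \<nu>) (qIm3 q / \<nu>))"

lemma unit_imag_imag_unit: "unit_imag (imag_unit q)"
proof -
  define \<nu> where "\<nu> = sqrt ((qIm1 q)\<^sup>2 + (qIm2 q)\<^sup>2 + (qIm3 q)\<^sup>2)"
  have \<nu>: "(qIm1 q)\<^sup>2 + (qIm2 q)\<^sup>2 + (qIm3 q)\<^sup>2 = \<nu>\<^sup>2"
    by (simp add: \<nu>_def)
  have "(qIm1 q / \<nu>)\<^sup>2 + (qIm2 q / \<nu>)\<^sup>2 + (qIm3 q / \<nu>)\<^sup>2 = 1" if "\<nu> \<noteq> 0"
    using that by (simp add: power_divide \<nu> flip: add_divide_distrib)
  then show ?thesis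
    by (simp add: imag_unit_def unit_imag_def Let_def flip: \<nu>_def)
qed

lemma in_slice_imag_unit: "q \<in> slice (imag_unit q)"
proof -
  define \<nu> where "\<nu> = sqrt ((qIm1 q)\<^sup>2 + (qIm2 q)\<^sup>2 + (qIm3 q)\<^sup>2)"
  have "q = qreal (qRe q) + qreal \<nu> * imag_unit q"
  proof (cases "\<nu> = 0")
    case True
    then have "qIm1 q = 0" "qIm2 q = 0" "qIm3 q = 0"
      by (simp_all add: \<nu>_def add_nonneg_eq_0_iff)
    with True show ?thesis
      by (simp add: quat_eq_iff qreal_def plus_quat_def times_quat_def imag_unit_def Let_def
          flip: \<nu>_def)
  next
    case False
    then show ?thesis
      by (simp add: quat_eq_iff qreal_def plus_quat_def times_quat_def imag_unit_def Let_def
          flip: \<nu>_def)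
  qed
  then show ?thesis
    unfolding slice_def by blast
qed

lemma unit_imag_square: "unit_imag j \<Longrightarrow> j * j = - 1"
  by (simp add: unit_imag_def quat_eq_iff times_quat_def uminus_quat_def one_quat_def
      power2_eq_square algebra_simps)

lemma unit_imag_qnorm: "unit_imag j \<Longrightarrow> qnorm j = 1"
  by (simp add: unit_imag_def qnorm_def)

lemma qcnj_slice: "unit_imag j \<Longrightarrow> qcnj (qreal a + qreal b * j) = qreal a + qreal (- b) * j"
  by (simp add: unit_imag_def quat_eq_iff qreal_def plus_quat_def times_quat_def qcnj_def)

lemma slice_mult_closed:
  assumes j: "unit_imag j" and "p \<in> slice j" "q \<in> slice j"
  shows "p * q \<in> slice j"
proof -
  obtain a b c d where pq: "p = qreal a + qreal b * j" "q = qreal c + qreal d * j"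
    using assms(2,3) unfolding slice_def by blast
  have j_qreal: "j * qreal r = qreal r * j" "j * (qreal r * x) = qreal r * (j * x)" for r x
    by (metis mult.assoc qreal_mult_commute)+
  have "p * q = qreal a * qreal c + qreal a * qreal d * j + qreal b * qreal c * j
      + qreal b * qreal d * (j * j)"
    unfolding pq by (simp add: distrib_left distrib_right mult.assoc j_qreal)
  also have "\<dots> = qreal (a * c - b * d) + qreal (a * d + b * c) * j"
    by (simp add: unit_imag_square[OF j] qreal_mult algebra_simps flip: qreal_add)
       (simp add: quat_eq_iff qreal_def plus_quat_def minus_quat_def uminus_quat_def)
  finally show ?thesis
    unfolding slice_def by blast
qed

lemma one_in_slice: "1 \<in> slice j"
proof -
  have "1 = qreal 1 + qreal 0 * j"
    by (simp add: qreal_def quat_eq_iff one_quat_def plus_quat_def times_quat_def)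
  then show ?thesis
    unfolding slice_def by blast
qed

lemma slice_power_closed: "unit_imag j \<Longrightarrow> p \<in> slice j \<Longrightarrow> p ^ n \<in> slice j"
  by (induction n) (simp_all add: one_in_slice slice_mult_closed)

lemma slice_qcnj_closed: "unit_imag j \<Longrightarrow> p \<in> slice j \<Longrightarrow> qcnj p \<in> slice j"
  unfolding slice_def using qcnj_slice by fastforce

section \<open>Two-sided quaternionic Banach spaces\<close>

locale qbanach =
  fixes L R :: "quat \<Rightarrow> 'a::banach \<Rightarrow> 'a"
  assumes two_sided: "two_sided_qbanach L R"
begin

lemma L_add: "L (s + t) v = L s v + L t v" and L_add_right: "L s (v + w) = L s v + L s w"
  and L_mult: "L (s * t) v = L s (L t v)" and L_one: "L 1 v = v"
  and R_add: "R (s + t) v = R s v + R t v" and R_add_right: "R s (v + w) = R s v + R s w"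
  and R_mult: "R (s * t) v = R t (R s v)" and R_one: "R 1 v = v"
  and L_R_commute: "L s (R t v) = R t (L s v)"
  and L_qreal: "L (qreal r) v = r *\<^sub>R v" and R_qreal: "R (qreal r) v = r *\<^sub>R v"
  and norm_L: "norm (L s v) = qnorm s * norm v" and norm_R: "norm (R s v) = qnorm s * norm v"
  using two_sided unfolding two_sided_qbanach_def by auto

lemma R_scaleR: "R q (c *\<^sub>R v) = c *\<^sub>R R q v"
  by (metis L_R_commute L_qreal)

lemma L_scaleR: "L q (c *\<^sub>R v) = c *\<^sub>R L q v"
  by (metis L_mult L_qreal qreal_mult_commute)

lemma bounded_linear_R: "bounded_linear (R q)"
  by (rule bounded_linear_intro[where K = "qnorm q"]) (auto simp: R_add_right R_scaleR norm_R)

lemma bounded_linear_L: "bounded_linear (L q)"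
  by (rule bounded_linear_intro[where K = "qnorm q"]) (auto simp: L_add_right L_scaleR norm_L)

definition Rop :: "quat \<Rightarrow> 'a bop" where
  "Rop q = Bop (R q)"

definition Lop :: "quat \<Rightarrow> 'a bop" where
  "Lop q = Bop (L q)"

lemma app_Rop [simp]: "app (Rop q) = R q"
  unfolding Rop_def by (rule app_Bop[OF bounded_linear_R])

lemma app_Lop [simp]: "app (Lop q) = L q"
  unfolding Lop_def by (rule app_Bop[OF bounded_linear_L])

lemma Rop_mult: "Rop (p * q) = Rop q * Rop p"
  by (rule bop_eqI) (simp add: R_mult)

lemma Lop_mult: "Lop (p * q) = Lop p * Lop q"
  by (rule bop_eqI) (simp add: L_mult)

lemma Rop_add: "Rop (p + q) = Rop p + Rop q"
  by (rule bop_eqI) (simp add: R_add)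

lemma Lop_add: "Lop (p + q) = Lop p + Lop q"
  by (rule bop_eqI) (simp add: L_add)

lemma Rop_qreal: "Rop (qreal r) = r *\<^sub>R 1"
  by (rule bop_eqI) (simp add: R_qreal)

lemma Lop_qreal: "Lop (qreal r) = r *\<^sub>R 1"
  by (rule bop_eqI) (simp add: L_qreal)

lemma Rop_one: "Rop 1 = 1"
  by (rule bop_eqI) (simp add: R_one)

lemma Rop_power: "Rop (q ^ n) = Rop q ^ n"
  by (induction n) (simp_all add: Rop_one Rop_mult power_commutes)

lemma commuting_Lop_Rop [simp]: "commuting (Lop p) (Rop q)"
  unfolding commuting_def by (rule bop_eqI) (simp add: L_R_commute)

lemma commuting_Rop: "p * q = q * p \<Longrightarrow> commuting (Rop p) (Rop q)"
  unfolding commuting_def by (metis Rop_mult)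

lemma commuting_Rop_qcnj [simp]: "commuting (Rop q) (Rop (qcnj q))" "commuting (Rop (qcnj q)) (Rop q)"
  by (simp_all add: commuting_Rop mult_qcnj_self)

lemma Rop_add_qcnj: "Rop q + Rop (qcnj q) = (2 * qRe q) *\<^sub>R 1"
  by (simp add: add_qcnj_self Rop_qreal flip: Rop_add)

lemma Rop_mult_qcnj: "Rop q * Rop (qcnj q) = (qnorm q)\<^sup>2 *\<^sub>R 1" "Rop (qcnj q) * Rop q = (qnorm q)\<^sup>2 *\<^sub>R 1"
  by (simp_all add: mult_qcnj_self Rop_qreal flip: Rop_mult)

definition proj_plus :: "quat \<Rightarrow> 'a bop" where
  "proj_plus j = (1/2) *\<^sub>R (1 + Rop j * Lop j)"

definition proj_minus :: "quat \<Rightarrow> 'a bop" where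
  "proj_minus j = (1/2) *\<^sub>R (1 - Rop j * Lop j)"

lemma proj_plus_add_proj_minus: "proj_plus j + proj_minus j = 1"
proof -
  have "(1 + Rop j * Lop j) + (1 - Rop j * Lop j) = (2::real) *\<^sub>R 1"
    by (simp add: scaleR_2)
  then show ?thesis
    unfolding proj_plus_def proj_minus_def by (simp flip: scaleR_add_right)
qed

lemma norm_proj_le:
  assumes "unit_imag j"
  shows "norm (proj_plus j) \<le> 1" and "norm (proj_minus j) \<le> 1"
proof -
  have isometry: "norm (app (Rop j * Lop j) v) = norm v" for v
    using unit_imag_qnorm[OF assms] by (simp add: norm_R norm_L)
  show "norm (proj_plus j) \<le> 1"
    unfolding proj_plus_def
    by (rule norm_bop_le) (auto intro!: order_trans[OF norm_triangle_ineq] simp: isometry[simplified])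
  show "norm (proj_minus j) \<le> 1"
    unfolding proj_minus_def
    by (rule norm_bop_le) (auto intro!: order_trans[OF norm_triangle_ineq4] simp: isometry[simplified])
qed

lemma Lop_slice_decomp:
  assumes j: "unit_imag j" and p: "p \<in> slice j"
  shows "Lop p = Rop (qcnj p) * proj_plus j + Rop p * proj_minus j"
    and "Lop p = proj_plus j * Rop (qcnj p) + proj_minus j * Rop p"
proof -
  obtain a b where p_eq: "p = qreal a + qreal b * j"
    using p unfolding slice_def by blast
  have Lp: "Lop p = a *\<^sub>R 1 + b *\<^sub>R Lop j"
    by (simp add: p_eq Lop_add Lop_mult Lop_qreal)
  have Rp: "Rop p = a *\<^sub>R 1 + b *\<^sub>R Rop j" and Rp': "Rop (qcnj p) = a *\<^sub>R 1 - b *\<^sub>R Rop j"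
    by (simp_all add: p_eq qcnj_slice[OF j] Rop_add Rop_mult Rop_qreal)
  have "- 1 = qreal (- 1)"
    by (simp add: quat_eq_iff qreal_def uminus_quat_def one_quat_def)
  then have "Rop j * Rop j = - 1" "Lop j * Lop j = - 1"
    by (simp_all add: unit_imag_square[OF j] Rop_qreal Lop_qreal flip: Rop_mult Lop_mult)
  moreover have "Lop j * Rop j = Rop j * Lop j"
    using commuting_Lop_Rop commuting_def by blast
  ultimately have jj: "Rop j * Rop j = - 1" "Lop j * Lop j = - 1" "Lop j * Rop j = Rop j * Lop j"
    "Rop j * (Rop j * X) = - X" "Lop j * (Lop j * X) = - X" "Lop j * (Rop j * X) = Rop j * (Lop j * X)"
    for X
    by (simp_all flip: mult.assoc)
  \<comment> \<open>on the range of \<open>proj_plus j\<close> left multiplication by \<open>j\<close> acts as right multiplication by \<open>- j\<close>,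
    on the range of \<open>proj_minus j\<close> as right multiplication by \<open>j\<close>\<close>
  have Lj: "Lop j * proj_plus j = - (Rop j * proj_plus j)" "proj_plus j * Lop j = - (proj_plus j * Rop j)"
    "Lop j * proj_minus j = Rop j * proj_minus j" "proj_minus j * Lop j = proj_minus j * Rop j"
    by (simp_all add: proj_plus_def proj_minus_def algebra_simps jj)
  have "Lop p * proj_plus j = Rop (qcnj p) * proj_plus j" "Lop p * proj_minus j = Rop p * proj_minus j"
    "proj_plus j * Lop p = proj_plus j * Rop (qcnj p)" "proj_minus j * Lop p = proj_minus j * Rop p"
    by (simp_all add: Lp Rp Rp' algebra_simps Lj)
  then show "Lop p = Rop (qcnj p) * proj_plus j + Rop p * proj_minus j"
    "Lop p = proj_plus j * Rop (qcnj p) + proj_minus j * Rop p"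
    using proj_plus_add_proj_minus[of j] by (metis distrib_left distrib_right mult_1_left mult_1_right)+
qed

lemma Lop_qcnj_power_mult:
  fixes s :: quat
  defines "j \<equiv> imag_unit s"
  shows "Lop (qcnj s ^ k * s ^ n)
      = Rop s ^ k * Rop (qcnj s) ^ n * proj_plus j + Rop (qcnj s) ^ k * Rop s ^ n * proj_minus j"
    and "Lop (qcnj s ^ k * s ^ n)
      = proj_plus j * (Rop (qcnj s) ^ n * Rop s ^ k) + proj_minus j * (Rop s ^ n * Rop (qcnj s) ^ k)"
proof -
  have j: "unit_imag j" and s: "s \<in> slice j"
    unfolding j_def by (rule unit_imag_imag_unit, rule in_slice_imag_unit)
  have p: "qcnj s ^ k * s ^ n \<in> slice j"
    by (intro slice_mult_closed slice_power_closed slice_qcnj_closed j s)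
  have "Rop (qcnj (qcnj s ^ k * s ^ n)) = Rop s ^ k * Rop (qcnj s) ^ n"
    "Rop (qcnj (qcnj s ^ k * s ^ n)) = Rop (qcnj s) ^ n * Rop s ^ k"
    by (simp_all add: qcnj_mult qcnj_power Rop_mult Rop_power commuting_def[symmetric])
  moreover have "Rop (qcnj s ^ k * s ^ n) = Rop (qcnj s) ^ k * Rop s ^ n"
    "Rop (qcnj s ^ k * s ^ n) = Rop s ^ n * Rop (qcnj s) ^ k"
    by (simp_all add: Rop_mult Rop_power commuting_def[symmetric] commuting_sym)
  ultimately show "Lop (qcnj s ^ k * s ^ n)
      = Rop s ^ k * Rop (qcnj s) ^ n * proj_plus j + Rop (qcnj s) ^ k * Rop s ^ n * proj_minus j"
    "Lop (qcnj s ^ k * s ^ n)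
      = proj_plus j * (Rop (qcnj s) ^ n * Rop s ^ k) + proj_minus j * (Rop s ^ n * Rop (qcnj s) ^ k)"
    using Lop_slice_decomp[OF j p] by simp_all
qed

end

section \<open>The S-resolvent and the Yosida approximations\<close>

locale qbanach_op = qbanach L R for L R :: "quat \<Rightarrow> 'a::banach \<Rightarrow> 'a" +
  fixes T :: "'a \<Rightarrow> 'a"
  assumes T_op: "qbounded_op R T"
begin

definition t :: "'a bop" where
  "t = Bop T"

lemma app_t [simp]: "app t = T"
  unfolding t_def using T_op by (simp add: qbounded_op_def app_Bop)

lemma commuting_Rop_t [simp]: "commuting (Rop q) t" "commuting t (Rop q)"
  using T_op by (auto simp: commuting_def qbounded_op_def intro!: bop_eqI)

lemma app_power_t: "app (t ^ n) = T ^^ n"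
  by (simp add: app_power)

lemma app_uminus_t: "app (- t) = (\<lambda>w. - T w)"
  by (simp add: fun_eq_iff)

definition Qb :: "quat \<Rightarrow> 'a bop" where
  "Qb s = t * t - (2 * qRe s) *\<^sub>R t + (qnorm s)\<^sup>2 *\<^sub>R 1"

lemma Qop_eq: "Qop s T = app (Qb s)"
  by (simp add: Qop_def Qb_def fun_eq_iff)

lemma Qb_qcnj: "Qb (qcnj s) = Qb s"
  by (simp add: Qb_def)

lemma commuting_Qb [simp]: "commuting (Qb s) (Rop q)" "commuting (Qb s) t"
  by (simp_all add: Qb_def)

lemma Qb_factor: "Qb s = (Rop s - t) * (Rop (qcnj s) - t)"
proof -
  have "(Rop s - t) * (Rop (qcnj s) - t) = Rop s * Rop (qcnj s) - t * (Rop s + Rop (qcnj s)) + t * t"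
    using commuting_Rop_t by (simp add: algebra_simps commuting_def)
  then show ?thesis
    by (simp add: Qb_def Rop_add_qcnj Rop_mult_qcnj algebra_simps)
qed

lemma Qinv_eq:
  assumes "x * Qb s = 1" "Qb s * x = 1"
  shows "Qinv s T = app x"
  unfolding Qinv_def Qop_eq
  by (rule inv_unique_comp) (use assms in \<open>auto simp: fun_eq_iff dest!: arg_cong[where f = app]\<close>)

(* For x the inverse of Q_s(T) and s' = qcnj s, E s x is R_s' (R_s' - T)^-1, which is the
   inverse of 1 - T R_s / |s|^2 (see E_right_inverse). *)
definition E :: "quat \<Rightarrow> 'a bop \<Rightarrow> 'a bop" where
  "E s x = (Rop s - t) * Rop (qcnj s) * x"

lemma E_right_inverse:
  assumes x: "x * Qb s = 1" "Qb s * x = 1" and s: "qnorm s \<noteq> 0"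
  shows "(1 - (1 / (qnorm s)\<^sup>2) *\<^sub>R (t * Rop s)) * E s x = 1"
proof -
  have "(qnorm s)\<^sup>2 *\<^sub>R (1 - (1 / (qnorm s)\<^sup>2) *\<^sub>R (t * Rop s)) = (Rop (qcnj s) - t) * Rop s"
    using s by (simp add: algebra_simps Rop_mult_qcnj(2))
  then have "(qnorm s)\<^sup>2 *\<^sub>R ((1 - (1 / (qnorm s)\<^sup>2) *\<^sub>R (t * Rop s)) * E s x)
      = (Rop (qcnj s) - t) * (Rop s * (Rop s - t)) * Rop (qcnj s) * x"
    by (simp add: E_def mult.assoc flip: mult_scaleR_left)
  also have "\<dots> = ((Rop s - t) * (Rop (qcnj s) - t)) * (Rop s * Rop (qcnj s)) * x"
  proof -
    have "Rop s * (Rop s - t) = (Rop s - t) * Rop s"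
      "(Rop (qcnj s) - t) * (Rop s - t) = (Rop s - t) * (Rop (qcnj s) - t)"
      by (simp_all add: commuting_def[symmetric] commuting_sym)
    then have "(Rop (qcnj s) - t) * (Rop s * (Rop s - t)) = (Rop s - t) * (Rop (qcnj s) - t) * Rop s"
      by (simp flip: mult.assoc)
    then show ?thesis
      by (simp add: mult.assoc)
  qed
  also have "\<dots> = (qnorm s)\<^sup>2 *\<^sub>R 1"
    using x by (simp add: Rop_mult_qcnj flip: Qb_factor)
  finally show ?thesis
    using s by simp
qed

lemma commuting_Qb_inverse:
  assumes "x * Qb s = 1" "Qb s * x = 1"
  shows "commuting x (Rop q)" "commuting x t"
  using commuting_inverse[OF assms] by simp_all

lemma E_power:
  assumes x: "x * Qb s = 1" "Qb s * x = 1"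
  shows "E s x ^ n = x ^ n * ((Rop s - t) ^ n * Rop (qcnj s) ^ n)"
    and "E s x ^ n = Rop (qcnj s) ^ n * (Rop s - t) ^ n * x ^ n"
proof -
  note cx = commuting_Qb_inverse[OF x]
  have "commuting ((Rop s - t) * Rop (qcnj s)) x"
    using cx by (simp add: commuting_sym)
  then have "E s x ^ n = (Rop s - t) ^ n * Rop (qcnj s) ^ n * x ^ n"
    unfolding E_def by (simp add: power_mult_commuting)
  moreover have "commuting (x ^ n) ((Rop s - t) ^ n * Rop (qcnj s) ^ n)"
    "commuting (Rop (qcnj s) ^ n) ((Rop s - t) ^ n)"
    using cx by simp_all
  ultimately show "E s x ^ n = x ^ n * ((Rop s - t) ^ n * Rop (qcnj s) ^ n)"
    "E s x ^ n = Rop (qcnj s) ^ n * (Rop s - t) ^ n * x ^ n"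
    by (simp_all add: commuting_def)
qed

lemma YL_eq:
  assumes x: "x * Qb s = 1" "Qb s * x = 1"
  defines "j \<equiv> imag_unit s"
  shows "YL L n s T = app (t ^ n * E s x ^ n * proj_plus j + t ^ n * E (qcnj s) x ^ n * proj_minus j)"
proof -
  define a b where "a = Rop s" and "b = Rop (qcnj s)"
  have x': "x * Qb (qcnj s) = 1" "Qb (qcnj s) * x = 1"
    using x by (simp_all add: Qb_qcnj)
  have "YL L n s T = app (t ^ n * x ^ n
      * (\<Sum>m=0..n. real (n choose m) *\<^sub>R ((- t) ^ m * Lop (qcnj s ^ (n - m) * s ^ n))))"
    by (simp add: YL_def SL_neg_def Qinv_eq[OF x] app_power app_uminus_t app_sum L_mult
        fun_eq_iff)
  also have "(\<Sum>m=0..n. real (n choose m) *\<^sub>R ((- t) ^ m * Lop (qcnj s ^ (n - m) * s ^ n)))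
      = (\<Sum>m=0..n. real (n choose m) *\<^sub>R ((- t) ^ m * a ^ (n - m))) * (b ^ n * proj_plus j)
      + (\<Sum>m=0..n. real (n choose m) *\<^sub>R ((- t) ^ m * b ^ (n - m))) * (a ^ n * proj_minus j)"
    unfolding Lop_qcnj_power_mult(1) a_def b_def j_def
    by (simp add: sum_distrib_right distrib_left scaleR_add_right sum.distrib mult.assoc)
  also have "\<dots> = (a - t) ^ n * (b ^ n * proj_plus j) + (b - t) ^ n * (a ^ n * proj_minus j)"
    by (simp add: binomial_sum_commuting a_def b_def)
  also have "t ^ n * x ^ n * \<dots> = t ^ n * E s x ^ n * proj_plus j + t ^ n * E (qcnj s) x ^ n * proj_minus j"
    by (simp add: E_power(1)[OF x] E_power(1)[OF x'] a_def b_def algebra_simps)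
  finally show ?thesis .
qed

lemma YR_eq:
  assumes x: "x * Qb s = 1" "Qb s * x = 1"
  defines "j \<equiv> imag_unit s"
  shows "YR L n s T = app (proj_plus j * E s x ^ n * t ^ n + proj_minus j * E (qcnj s) x ^ n * t ^ n)"
proof -
  define a b where "a = Rop s" and "b = Rop (qcnj s)"
  have x': "x * Qb (qcnj s) = 1" "Qb (qcnj s) * x = 1"
    using x by (simp_all add: Qb_qcnj)
  have "YR L n s T = app (Lop (s ^ n)
      * (\<Sum>m=0..n. real (n choose m) *\<^sub>R (Lop (qcnj s ^ (n - m)) * (- t) ^ m)) * x ^ n * t ^ n)"
    by (simp add: YR_def SR_neg_def Qinv_eq[OF x] app_power app_uminus_t app_sum fun_eq_iff)
  also have "Lop (s ^ n) * (\<Sum>m=0..n. real (n choose m) *\<^sub>R (Lop (qcnj s ^ (n - m)) * (- t) ^ m))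
      = (\<Sum>m=0..n. real (n choose m) *\<^sub>R (Lop (qcnj s ^ (n - m) * s ^ n) * (- t) ^ m))"
  proof -
    have "s ^ n * qcnj s ^ k = qcnj s ^ k * s ^ n" for k
      by (metis mult_qcnj_self power_commuting_commutes power_commutes)
    then show ?thesis
      by (simp add: sum_distrib_left flip: Lop_mult mult.assoc)
  qed
  also have "\<dots> = proj_plus j * b ^ n * (\<Sum>m=0..n. real (n choose m) *\<^sub>R (a ^ (n - m) * (- t) ^ m))
      + proj_minus j * a ^ n * (\<Sum>m=0..n. real (n choose m) *\<^sub>R (b ^ (n - m) * (- t) ^ m))"
    unfolding Lop_qcnj_power_mult(2) a_def b_def j_def
    by (simp add: sum_distrib_left distrib_right scaleR_add_right sum.distrib mult.assoc)
  also have "\<dots> = proj_plus j * b ^ n * (a - t) ^ n + proj_minus j * a ^ n * (b - t) ^ n"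
    by (simp add: binomial_sum_commuting a_def b_def)
  also have "\<dots> * x ^ n * t ^ n = proj_plus j * E s x ^ n * t ^ n + proj_minus j * E (qcnj s) x ^ n * t ^ n"
    by (simp add: E_power(2)[OF x] E_power(2)[OF x'] a_def b_def algebra_simps)
  finally show ?thesis .
qed

lemma Qb_eq_scaled_product:
  assumes s: "qnorm s \<noteq> 0"
  defines "c \<equiv> 1 / (qnorm s)\<^sup>2"
  shows "Qb s = (qnorm s)\<^sup>2 *\<^sub>R ((1 - c *\<^sub>R (t * Rop (qcnj s))) * (1 - c *\<^sub>R (t * Rop s)))"
proof -
  have tR: "Rop q * t = t * Rop q" "Rop q * (t * z) = t * (Rop q * z)" for q z
    using commuting_Rop_t(1)[of q] by (simp_all add: commuting_def flip: mult.assoc)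
  have "(1 - c *\<^sub>R (t * Rop (qcnj s))) * (1 - c *\<^sub>R (t * Rop s))
      = 1 - c *\<^sub>R (t * (Rop s + Rop (qcnj s))) + (c * c) *\<^sub>R (t * t * (Rop (qcnj s) * Rop s))"
    by (simp add: algebra_simps tR)
  also have "\<dots> = 1 - (c * (2 * qRe s)) *\<^sub>R t + (c * c * (qnorm s)\<^sup>2) *\<^sub>R (t * t)"
    by (simp add: Rop_add_qcnj Rop_mult_qcnj)
  finally have product: "(1 - c *\<^sub>R (t * Rop (qcnj s))) * (1 - c *\<^sub>R (t * Rop s))
      = 1 - (c * (2 * qRe s)) *\<^sub>R t + (c * c * (qnorm s)\<^sup>2) *\<^sub>R (t * t)" .
  have "Qb s = (qnorm s)\<^sup>2 *\<^sub>R (1 - (c * (2 * qRe s)) *\<^sub>R t + (c * c * (qnorm s)\<^sup>2) *\<^sub>R (t * t))"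
    using s by (simp add: Qb_def c_def algebra_simps)
  then show ?thesis
    by (simp only: product)
qed

lemma Y_real_factorization:
  assumes r: "r > 1" and res: "qreal r \<in> S_resolvent_set R T"
  shows "\<exists>Z. YL L n (qreal r) T = app Z \<and> t ^ n = (1 - (1 / r) *\<^sub>R t) ^ n * Z"
    and "\<exists>Z. YR L n (qreal r) T = app Z \<and> t ^ n = (1 - (1 / r) *\<^sub>R t) ^ n * Z"
proof -
  obtain S where S: "qbounded_op R S" "S \<circ> Qop (qreal r) T = id" "Qop (qreal r) T \<circ> S = id"
    using res unfolding S_resolvent_set_def by blast
  have app_S: "app (Bop S) = S"
    using S(1) by (simp add: qbounded_op_def app_Bop)
  have x: "Bop S * Qb (qreal r) = 1" "Qb (qreal r) * Bop S = 1"
    using S(2,3) by (simp_all add: bop_eqI app_S Qop_eq fun_eq_iff)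
  define U W where "U = 1 - (1 / r) *\<^sub>R t" and "W = E (qreal r) (Bop S)"
  have "(1 / r\<^sup>2) *\<^sub>R (t * Rop (qreal r)) = (1 / r) *\<^sub>R t"
    using r by (simp add: Rop_qreal power2_eq_square)
  then have "U * W = 1"
    unfolding U_def W_def using E_right_inverse[OF x] r by simp
  then have UW: "U ^ n * W ^ n = 1"
    by (rule left_right_inverse_power)
  have "commuting (U ^ n) (t ^ n)"
    unfolding U_def by simp
  then have "t ^ n = U ^ n * (t ^ n * W ^ n)" "t ^ n = U ^ n * (W ^ n * t ^ n)"
    using UW by (simp_all add: commuting_def flip: mult.assoc) (simp add: mult.assoc)
  moreover have "YL L n (qreal r) T = app (t ^ n * W ^ n)" "YR L n (qreal r) T = app (W ^ n * t ^ n)"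
    using YL_eq[OF x, of n] YR_eq[OF x, of n]
    by (simp_all add: W_def mult.assoc flip: distrib_left distrib_right)
       (simp_all add: proj_plus_add_proj_minus flip: mult.assoc)
  ultimately show "\<exists>Z. YL L n (qreal r) T = app Z \<and> t ^ n = (1 - (1 / r) *\<^sub>R t) ^ n * Z"
    "\<exists>Z. YR L n (qreal r) T = app Z \<and> t ^ n = (1 - (1 / r) *\<^sub>R t) ^ n * Z"
    unfolding U_def by blast+
qed

end

section \<open>Power-bounded operators\<close>

locale power_bounded_qop = qbanach_op L R T for L R :: "quat \<Rightarrow> 'a::banach \<Rightarrow> 'a" and T +
  fixes M :: real
  assumes power_bounded: "\<And>k v. norm ((T ^^ k) v) \<le> M * norm v" and M_nonneg: "0 \<le> M"
begin

definition orbit_norm :: "'a \<Rightarrow> real" where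
  "orbit_norm v = (SUP k. norm ((T ^^ k) v))"

lemma bdd_above_orbit: "bdd_above (range (\<lambda>k. norm ((T ^^ k) v)))"
  using power_bounded by (intro bdd_aboveI2[where M = "M * norm v"]) auto

lemma norm_power_le_orbit_norm: "norm ((T ^^ k) v) \<le> orbit_norm v"
  unfolding orbit_norm_def by (rule cSUP_upper[OF _ bdd_above_orbit]) simp

lemma norm_le_orbit_norm: "norm v \<le> orbit_norm v"
  using norm_power_le_orbit_norm[of 0 v] by simp

lemma orbit_norm_le: "orbit_norm v \<le> M * norm v"
  unfolding orbit_norm_def by (rule cSUP_least) (auto simp: power_bounded)

lemma orbit_norm_triangle: "orbit_norm (v + w) \<le> orbit_norm v + orbit_norm w"
  unfolding orbit_norm_def[of "v + w"]
proof (rule cSUP_least)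
  fix k
  have "(T ^^ k) (v + w) = (T ^^ k) v + (T ^^ k) w"
    using linear_simps(1)[OF bounded_linear_app[of "t ^ k"]] by (simp add: app_power_t)
  then have "norm ((T ^^ k) (v + w)) \<le> norm ((T ^^ k) v) + norm ((T ^^ k) w)"
    by (simp add: norm_triangle_ineq)
  then show "norm ((T ^^ k) (v + w)) \<le> orbit_norm v + orbit_norm w"
    using norm_power_le_orbit_norm[of k v] norm_power_le_orbit_norm[of k w] by linarith
qed simp

lemma orbit_norm_scaleR: "orbit_norm (c *\<^sub>R v) \<le> \<bar>c\<bar> * orbit_norm v"
  unfolding orbit_norm_def[of "c *\<^sub>R v"]
proof (rule cSUP_least)
  fix k
  have "(T ^^ k) (c *\<^sub>R v) = c *\<^sub>R (T ^^ k) v"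
    using linear_simps(5)[OF bounded_linear_app[of "t ^ k"]] by (simp add: app_power_t)
  then show "norm ((T ^^ k) (c *\<^sub>R v)) \<le> \<bar>c\<bar> * orbit_norm v"
    by (simp add: norm_power_le_orbit_norm mult_left_mono)
qed simp

lemma orbit_norm_power: "orbit_norm ((T ^^ n) v) \<le> orbit_norm v"
  unfolding orbit_norm_def[of "(T ^^ n) v"]
proof (rule cSUP_least)
  fix k
  show "norm ((T ^^ k) ((T ^^ n) v)) \<le> orbit_norm v"
    using norm_power_le_orbit_norm[of "k + n" v] by (simp add: funpow_add)
qed simp

lemma orbit_norm_R: "orbit_norm (R q v) \<le> qnorm q * orbit_norm v"
  unfolding orbit_norm_def[of "R q v"]
proof (rule cSUP_least)
  fix k
  have "commuting (t ^ k) (Rop q)"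
    by simp
  then have "(T ^^ k) (R q v) = R q ((T ^^ k) v)"
    unfolding commuting_def app_power_t[symmetric] by (metis app_Rop app_simps(6))
  then show "norm ((T ^^ k) (R q v)) \<le> qnorm q * orbit_norm v"
    by (simp add: norm_R norm_power_le_orbit_norm mult_left_mono qnorm_nonneg)
qed simp

lemma orbit_norm_scaled_TR:
  "orbit_norm (app (c *\<^sub>R (t * Rop q)) v) \<le> \<bar>c\<bar> * qnorm q * orbit_norm v"
proof -
  have "orbit_norm (app (c *\<^sub>R (t * Rop q)) v) \<le> \<bar>c\<bar> * orbit_norm (T (R q v))"
    using orbit_norm_scaleR by simp
  also have "orbit_norm (T (R q v)) \<le> qnorm q * orbit_norm v"
    using orbit_norm_power[of 1 "R q v"] orbit_norm_R[of q v] by simp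
  finally show ?thesis
    by (simp add: mult.assoc mult_left_mono)
qed

lemma norm_scaled_TR_power_le:
  assumes "0 \<le> c"
  shows "norm (app ((c *\<^sub>R (t * Rop q)) ^ k) v) \<le> M * (c * qnorm q) ^ k * norm v"
proof -
  have "orbit_norm (app ((c *\<^sub>R (t * Rop q)) ^ k) v) \<le> (c * qnorm q) ^ k * orbit_norm v"
  proof (induction k)
    case (Suc k)
    have "orbit_norm (app ((c *\<^sub>R (t * Rop q)) ^ Suc k) v)
        \<le> c * qnorm q * orbit_norm (app ((c *\<^sub>R (t * Rop q)) ^ k) v)"
      using orbit_norm_scaled_TR[of c q] assms by simp
    also have "\<dots> \<le> c * qnorm q * ((c * qnorm q) ^ k * orbit_norm v)"
      using Suc.IH assms qnorm_nonneg by (intro mult_left_mono) auto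
    finally show ?case
      by (simp add: mult.assoc)
  qed simp
  also have "\<dots> \<le> (c * qnorm q) ^ k * (M * norm v)"
    using assms qnorm_nonneg orbit_norm_le by (intro mult_left_mono) auto
  finally show ?thesis
    using norm_le_orbit_norm[of "app ((c *\<^sub>R (t * Rop q)) ^ k) v"] by (simp add: mult_ac)
qed

lemma orbit_norm_right_inverse_power:
  assumes W: "(1 - c *\<^sub>R (t * Rop q)) * W = 1" and c: "0 \<le> c" "c * qnorm q < 1"
  shows "orbit_norm (app (W ^ n) v) \<le> orbit_norm v / (1 - c * qnorm q) ^ n"
proof -
  \<comment> \<open>\<open>W w = w + c T R\<^sub>q W w\<close>, and \<open>c T R\<^sub>q\<close> is a strict contraction for \<open>orbit_norm\<close>\<close>
  have step: "orbit_norm (app W w) \<le> orbit_norm w / (1 - c * qnorm q)" for w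
  proof -
    have "w + app (c *\<^sub>R (t * Rop q)) (app W w) = app W w"
      using arg_cong[OF W, of "\<lambda>f. app f w"] by (simp add: algebra_simps)
    then have "orbit_norm (app W w) \<le> orbit_norm w + orbit_norm (app (c *\<^sub>R (t * Rop q)) (app W w))"
      using orbit_norm_triangle[of w] by metis
    also have "\<dots> \<le> orbit_norm w + c * qnorm q * orbit_norm (app W w)"
      using orbit_norm_scaled_TR[of c q "app W w"] c by simp
    finally show ?thesis
      using c by (simp add: pos_le_divide_eq algebra_simps)
  qed
  show ?thesis
  proof (induction n arbitrary: v)
    case (Suc n)
    have "orbit_norm (app (W ^ Suc n) v) \<le> orbit_norm (app (W ^ n) v) / (1 - c * qnorm q)"
      using step[of "app (W ^ n) v"] by (simp add: power_Suc2)
    also have "\<dots> \<le> orbit_norm v / (1 - c * qnorm q) ^ n / (1 - c * qnorm q)"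
      using c by (intro divide_right_mono Suc.IH) simp
    finally show ?case
      by (simp add: field_simps)
  qed simp
qed

lemma norm_right_inverse_power_le:
  assumes W: "(1 - c *\<^sub>R (t * Rop q)) * W = 1" and c: "0 \<le> c" "c * qnorm q < 1"
  shows "norm (t ^ n * W ^ n) \<le> M / (1 - c * qnorm q) ^ n"
    and "norm (W ^ n * t ^ n) \<le> M / (1 - c * qnorm q) ^ n"
proof -
  have d: "0 < (1 - c * qnorm q) ^ n"
    using c by simp
  have W_n: "orbit_norm (app (W ^ n) w) \<le> orbit_norm w / (1 - c * qnorm q) ^ n" for w
    by (rule orbit_norm_right_inverse_power[OF W c])
  have M: "orbit_norm w / (1 - c * qnorm q) ^ n \<le> M / (1 - c * qnorm q) ^ n * norm v"
    if "orbit_norm w \<le> orbit_norm v" for v w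
    using that orbit_norm_le[of v] d by (simp add: divide_right_mono)
  have "norm (app (t ^ n * W ^ n) v) \<le> M / (1 - c * qnorm q) ^ n * norm v" for v
    using norm_power_le_orbit_norm[of n "app (W ^ n) v"] W_n[of v] M[of v v]
    by (simp add: app_power_t)
  moreover have "norm (app (W ^ n * t ^ n) v) \<le> M / (1 - c * qnorm q) ^ n * norm v" for v
    using norm_le_orbit_norm[of "app (W ^ n) ((T ^^ n) v)"] W_n[of "(T ^^ n) v"]
      M[OF orbit_norm_power[of n v]]
    by (simp add: app_power_t)
  ultimately show "norm (t ^ n * W ^ n) \<le> M / (1 - c * qnorm q) ^ n"
    "norm (W ^ n * t ^ n) \<le> M / (1 - c * qnorm q) ^ n"
    using M_nonneg d by (auto intro: norm_bop_le)
qed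

lemma Qb_invertible:
  assumes s: "qnorm s > 1"
  shows "\<exists>x. x * Qb s = 1 \<and> Qb s * x = 1"
proof -
  define c where "c = 1 / (qnorm s)\<^sup>2"
  have c: "0 \<le> c" "c * qnorm s < 1" "c * qnorm s \<ge> 0"
    using s by (simp_all add: c_def power2_eq_square)
  have "\<exists>W. W * (1 - c *\<^sub>R (t * Rop q)) = 1 \<and> (1 - c *\<^sub>R (t * Rop q)) * W = 1"
    if "qnorm q = qnorm s" for q
    using norm_scaled_TR_power_le[OF c(1), of q] c that
    by (intro neumann_series_inverse[of _ M "c * qnorm s"]) auto
  then obtain W1 W2 where
    W1: "W1 * (1 - c *\<^sub>R (t * Rop (qcnj s))) = 1" "(1 - c *\<^sub>R (t * Rop (qcnj s))) * W1 = 1" and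
    W2: "W2 * (1 - c *\<^sub>R (t * Rop s)) = 1" "(1 - c *\<^sub>R (t * Rop s)) * W2 = 1"
    by (metis qnorm_qcnj)
  have Qb: "Qb s = (qnorm s)\<^sup>2 *\<^sub>R ((1 - c *\<^sub>R (t * Rop (qcnj s))) * (1 - c *\<^sub>R (t * Rop s)))"
    using s unfolding c_def by (intro Qb_eq_scaled_product) simp
  have "(c *\<^sub>R (W2 * W1)) * Qb s = 1" "Qb s * (c *\<^sub>R (W2 * W1)) = 1"
    using s W1 W2 by (simp_all add: Qb c_def mult.assoc) (simp_all flip: mult.assoc)
  then show ?thesis
    by blast
qed

lemma in_S_resolvent_set:
  assumes "qnorm s > 1"
  shows "s \<in> S_resolvent_set R T"
proof -
  obtain x where x: "x * Qb s = 1" "Qb s * x = 1"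
    using Qb_invertible[OF assms] by blast
  have "app x (R q v) = R q (app x v)" for q v
    using commuting_Qb_inverse(1)[OF x, of q] unfolding commuting_def
    by (metis app_Rop app_simps(6))
  then have "qbounded_op R (app x)"
    unfolding qbounded_op_def by (simp add: bounded_linear_app)
  moreover have "app x \<circ> Qop s T = id" "Qop s T \<circ> app x = id"
    unfolding Qop_eq using x by (auto simp: fun_eq_iff dest!: arg_cong[where f = app])
  ultimately show ?thesis
    unfolding S_resolvent_set_def by blast
qed

lemma norm_E_power_le:
  assumes s: "qnorm s > 1" and x: "x * Qb s = 1" "Qb s * x = 1"
  shows "norm (t ^ n * E s x ^ n) \<le> M / (1 - 1 / qnorm s) ^ n"
    and "norm (E s x ^ n * t ^ n) \<le> M / (1 - 1 / qnorm s) ^ n"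
proof -
  have c: "1 / (qnorm s)\<^sup>2 * qnorm s = 1 / qnorm s"
    using s by (simp add: power2_eq_square)
  have "(1 - (1 / (qnorm s)\<^sup>2) *\<^sub>R (t * Rop s)) * E s x = 1"
    using E_right_inverse[OF x] s by simp
  from norm_right_inverse_power_le[OF this, of n] show
    "norm (t ^ n * E s x ^ n) \<le> M / (1 - 1 / qnorm s) ^ n"
    "norm (E s x ^ n * t ^ n) \<le> M / (1 - 1 / qnorm s) ^ n"
    using s unfolding c by simp_all
qed

lemma norm_YL_le:
  assumes s: "qnorm s > 1"
  shows "onorm (YL L n s T) \<le> 2 * M / (1 - 1 / qnorm s) ^ n"
proof -
  obtain x where x: "x * Qb s = 1" "Qb s * x = 1"
    using Qb_invertible[OF s] by blast
  then have x': "x * Qb (qcnj s) = 1" "Qb (qcnj s) * x = 1"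
    by (simp_all add: Qb_qcnj)
  define A B where "A = t ^ n * E s x ^ n" and "B = t ^ n * E (qcnj s) x ^ n"
  have "onorm (YL L n s T) = norm (A * proj_plus (imag_unit s) + B * proj_minus (imag_unit s))"
    unfolding YL_eq[OF x] A_def B_def norm_bop.rep_eq ..
  also have "\<dots> \<le> norm A * norm (proj_plus (imag_unit s)) + norm B * norm (proj_minus (imag_unit s))"
    by (meson add_mono norm_triangle_ineq norm_mult_ineq order_trans)
  also have "\<dots> \<le> norm A + norm B"
    using norm_proj_le[OF unit_imag_imag_unit] by (intro add_mono mult_left_le) simp_all
  also have "\<dots> \<le> M / (1 - 1 / qnorm s) ^ n + M / (1 - 1 / qnorm s) ^ n"
    using norm_E_power_le(1)[OF s x] norm_E_power_le(1)[of "qcnj s", OF _ x'] s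
    unfolding A_def B_def by (intro add_mono) simp_all
  finally show ?thesis
    by (metis add_divide_distrib mult_2)
qed

lemma norm_YR_le:
  assumes s: "qnorm s > 1"
  shows "onorm (YR L n s T) \<le> 2 * M / (1 - 1 / qnorm s) ^ n"
proof -
  obtain x where x: "x * Qb s = 1" "Qb s * x = 1"
    using Qb_invertible[OF s] by blast
  then have x': "x * Qb (qcnj s) = 1" "Qb (qcnj s) * x = 1"
    by (simp_all add: Qb_qcnj)
  define A B where "A = E s x ^ n * t ^ n" and "B = E (qcnj s) x ^ n * t ^ n"
  have "onorm (YR L n s T) = norm (proj_plus (imag_unit s) * A + proj_minus (imag_unit s) * B)"
    unfolding YR_eq[OF x] A_def B_def norm_bop.rep_eq by (simp add: mult.assoc)
  also have "\<dots> \<le> norm (proj_plus (imag_unit s)) * norm A + norm (proj_minus (imag_unit s)) * norm B"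
    by (meson add_mono norm_triangle_ineq norm_mult_ineq order_trans)
  also have "\<dots> \<le> norm A + norm B"
    using norm_proj_le[OF unit_imag_imag_unit] by (intro add_mono mult_left_le_one_le) simp_all
  also have "\<dots> \<le> M / (1 - 1 / qnorm s) ^ n + M / (1 - 1 / qnorm s) ^ n"
    using norm_E_power_le(2)[OF s x] norm_E_power_le(2)[of "qcnj s", OF _ x'] s
    unfolding A_def B_def by (intro add_mono) simp_all
  finally show ?thesis
    by (metis add_divide_distrib mult_2)
qed

end

context qbanach_op
begin

lemma power_bounded_imp_Y_bounds:
  assumes "\<exists>M. \<forall>n\<ge>1. onorm (T ^^ n) \<le> M"
  shows "(\<forall>s. qnorm s > 1 \<longrightarrow> s \<in> S_resolvent_set R T)
    \<and> (\<exists>C>0. \<forall>s n. qnorm s > 1 \<and> n \<ge> 1 \<longrightarrow> onorm (YL L n s T) \<le> C / (1 - 1 / qnorm s) ^ n)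
    \<and> (\<exists>C>0. \<forall>s n. qnorm s > 1 \<and> n \<ge> 1 \<longrightarrow> onorm (YR L n s T) \<le> C / (1 - 1 / qnorm s) ^ n)"
proof -
  obtain M where M: "\<forall>n\<ge>1. onorm (T ^^ n) \<le> M"
    using assms by blast
  have "norm ((T ^^ k) v) \<le> max M 1 * norm v" for k v
  proof (cases "k = 0")
    case True
    then show ?thesis
      using mult_right_mono[of 1 "max M 1" "norm v"] by simp
  next
    case False
    have "norm ((T ^^ k) v) \<le> onorm (T ^^ k) * norm v"
      using onorm[OF bounded_linear_app[of "t ^ k"]] by (simp add: app_power_t)
    also have "\<dots> \<le> max M 1 * norm v"
      using M False by (intro mult_right_mono) (auto simp: le_max_iff_disj)
    finally show ?thesis .
  qed
  then interpret power_bounded_qop L R T "max M 1"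
    by unfold_locales simp_all
  show ?thesis
    using in_S_resolvent_set norm_YL_le norm_YR_le by (intro conjI exI[of _ "2 * max M 1"]) auto
qed

lemma Y_bounded_imp_power_bounded:
  assumes res: "\<forall>s. qnorm s > 1 \<longrightarrow> s \<in> S_resolvent_set R T"
    and Y_factor: "\<And>n r. r > 1 \<Longrightarrow> qreal r \<in> S_resolvent_set R T
      \<Longrightarrow> \<exists>Z. Y n (qreal r) = app Z \<and> t ^ n = (1 - (1 / r) *\<^sub>R t) ^ n * Z"
    and bound: "\<exists>C>0. \<forall>s n. qnorm s > 1 \<and> n \<ge> 1 \<longrightarrow> onorm (Y n s) \<le> C / (1 - 1 / qnorm s) ^ n"
  shows "\<exists>M. \<forall>n\<ge>1. onorm (T ^^ n) \<le> M"
proof -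
  obtain C where C: "\<forall>s n. qnorm s > 1 \<and> n \<ge> 1 \<longrightarrow> onorm (Y n s) \<le> C / (1 - 1 / qnorm s) ^ n"
    using bound by blast
  have "norm (t ^ n) \<le> C" if n: "n \<ge> 1" for n
  proof (rule norm_power_le_of_factorization)
    fix r :: real
    assume r: "r > 1"
    then have "qreal r \<in> S_resolvent_set R T"
      using res by simp
    then obtain Z where Z: "Y n (qreal r) = app Z" "t ^ n = (1 - (1 / r) *\<^sub>R t) ^ n * Z"
      using Y_factor[OF r] by blast
    have "norm Z \<le> C / (1 - 1 / r) ^ n"
      using C[rule_format, of "qreal r" n] r n by (simp add: Z(1) norm_bop.rep_eq)
    with Z(2) show "\<exists>Z. t ^ n = (1 - (1 / r) *\<^sub>R t) ^ n * Z \<and> norm Z \<le> C / (1 - 1 / r) ^ n"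
      by blast
  qed
  then show ?thesis
    by (auto simp: norm_bop.rep_eq app_power_t)
qed

end

theorem theorem3p7:
  fixes L R :: "quat \<Rightarrow> 'a::banach \<Rightarrow> 'a" and T :: "'a \<Rightarrow> 'a"
  assumes "two_sided_qbanach L R" and "qbounded_op R T"
  shows "((\<exists>M. \<forall>n\<ge>1. onorm (T ^^ n) \<le> M) \<longleftrightarrow>
            ((\<forall>s. qnorm s > 1 \<longrightarrow> s \<in> S_resolvent_set R T) \<and>
             (\<exists>C>0. \<forall>s n. qnorm s > 1 \<and> n \<ge> 1 \<longrightarrow>
                onorm (YL L n s T) \<le> C / (1 - 1 / qnorm s) ^ n))) \<and>
         ((\<exists>M. \<forall>n\<ge>1. onorm (T ^^ n) \<le> M) \<longleftrightarrow>
            ((\<forall>s. qnorm s > 1 \<longrightarrow> s \<in> S_resolvent_set R T) \<and>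
             (\<exists>C>0. \<forall>s n. qnorm s > 1 \<and> n \<ge> 1 \<longrightarrow>
                onorm (YR L n s T) \<le> C / (1 - 1 / qnorm s) ^ n)))"
proof -
  interpret qbanach_op L R T
    using assms by unfold_locales
  show ?thesis
    using power_bounded_imp_Y_bounds
      Y_bounded_imp_power_bounded[of "\<lambda>n s. YL L n s T", OF _ Y_real_factorization(1)]
      Y_bounded_imp_power_bounded[of "\<lambda>n s. YR L n s T", OF _ Y_real_factorization(2)]
    by blast
qed

end
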